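(* Let $\pi:D\to M$ be a homomorphism from a discrete semigroup $D$ to a Hausdorff topological semigroup $M$, and let $S=D\cup_\pi M$ (a semitopological semigroup). The following are equivalent: (1) $S$ is a topological semigroup (multiplication jointly continuous); (2) for each $c\in D$ the set $D_c=\{(x,y)\in D\times D:xy=c\}$ is closed in $S\times S$. If moreover $\pi$ is finitely resolvable, then (1) and (2) are equivalent to (3) for each $c\in D$ the set $\pi^2(D_c)=\{(\pi(x),\pi(y)):(x,y)\in D_c\}$ is closed and discrete in $M\times M$, and they are implied by (4) the subspace $\pi(D)$ is discrete in $M$ and $M\setminus\pi(D)$ is a two-sided ideal in $M$.
   Context: For a discrete space $D$: if $D$ is infinite, $\alpha D=D\cup\{\infty\}$ is its one-point compactification; if $D$ is finite, $\alpha D$ is the topological sum of $D$ and an isolated point $\infty\notin D$. For a map $\pi:D\to M$, $D\cup_\pi M$ is the subspace $\{(x,\pi(x)):x\in D\}\cup(\{\infty\}\times M)$ of $\alpha D\times M$, with $D$ identified with $\{(x,\pi(x))\}$ and $M$ with $\{\infty\}\times M$. When $D$ is a semigroup, $M$ a semitopological semigroup and $\pi$ a homomorphism, $D\cup_\pi M$ carries the semigroup operation extending those of $D$ and $M$ by $xy=\pi(x)y$ for $x\in D,y\in M$ and $xy=x\pi(y)$ for $x\in M,y\in D$; this makes it a semitopological semigroup (separately continuous multiplication). The homomorphism $\pi$ is finitely resolvable if for all $a,b\in M$ and $c\in D$ the set $\{(x,y)\in D\times D:\pi(x)=a,\ \pi(y)=b,\ xy=c\}$ is finite. *)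

theory Defs
  imports "HOL-Analysis.Analysis"
begin

text \<open>The space \<alpha>D on type d option, with None playing the role of the point at infinity.  For infinite D this is the
  one-point compactification of the discrete space D; for finite D every set is open, i.e. \<alpha>D is
  the discrete sum of D and an isolated point.\<close>
definition alpha_top :: "'d option topology" where
  "alpha_top = topology (\<lambda>U. None \<in> U \<longrightarrow> finite (- U))"

text \<open>Underlying set of D \<union>_\<pi> M as a subset of \<alpha>D \<times> M.\<close>
definition glue_carrier :: "('d \<Rightarrow> 'm) \<Rightarrow> ('d option \<times> 'm) set" where
  "glue_carrier \<pi> = {(Some x, \<pi> x) | x. True} \<union> {(None, m) | m. True}"

definition glue_top :: "('d \<Rightarrow> 'm::topological_space) \<Rightarrow> ('d option \<times> 'm) topology" where
  "glue_top \<pi> = subtopology (prod_topology alpha_top euclidean) (glue_carrier \<pi>)"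

text \<open>Multiplication of D \<union>_\<pi> M (on carrier points: xy in D, \<pi>(x)y, x\<pi>(y), or in M).\<close>
definition glue_mult ::
  "('d::semigroup_mult) option \<times> ('m::semigroup_mult) \<Rightarrow> 'd option \<times> 'm \<Rightarrow> 'd option \<times> 'm" where
  "glue_mult s t = ((case (fst s, fst t) of (Some x, Some y) \<Rightarrow> Some (x * y) | _ \<Rightarrow> None),
                    snd s * snd t)"

definition finitely_resolvable :: "('d::semigroup_mult \<Rightarrow> 'm) \<Rightarrow> bool" where
  "finitely_resolvable \<pi> \<longleftrightarrow>
     (\<forall>a b c. finite {(x, y). \<pi> x = a \<and> \<pi> y = b \<and> x * y = c})"

definition two_sided_ideal :: "'m::semigroup_mult set \<Rightarrow> bool" where
  "two_sided_ideal I \<longleftrightarrow> (\<forall>a\<in>I. \<forall>m. m * a \<in> I \<and> a * m \<in> I)"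

end

theory Submission
  imports Defs
begin

text \<open>
  Multiplication on \<open>S\<close> is continuous iff each \<open>D\<^sub>c\<close> is closed in \<open>S \<times> S\<close>: the \<open>M\<close>-coordinate of the
  product is always continuous, and the \<open>D\<close>-coordinate is continuous exactly when the preimages
  \<open>D\<^sub>c\<close> of the isolated points \<open>c\<close> are closed.  Closedness of \<open>D\<^sub>c\<close> is then analysed point by
  point through the basic neighbourhoods ("coboxes") of \<open>S\<close>, giving three separation properties.
  In a \<open>T\<^sub>1\<close> space these imply that \<open>\<pi>\<^sup>2(D\<^sub>c)\<close> has no limit points in \<open>M \<times> M\<close>, i.e. is closed
  and discrete; finite resolvability gives the converse.  Finally, condition (4) directly
  implies that these sets have no limit points.
\<close>

lemma closedin_prod_iff_boxes:
  assumes "Z \<subseteq> topspace X \<times> topspace Y"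
  shows "closedin (prod_topology X Y) Z \<longleftrightarrow>
    (\<forall>x\<in>topspace X. \<forall>y\<in>topspace Y. (x, y) \<notin> Z \<longrightarrow>
       (\<exists>U V. openin X U \<and> openin Y V \<and> x \<in> U \<and> y \<in> V \<and> (U \<times> V) \<inter> Z = {}))"
    (is "_ \<longleftrightarrow> ?R")
proof -
  have "closedin (prod_topology X Y) Z \<longleftrightarrow> openin (prod_topology X Y) (topspace X \<times> topspace Y - Z)"
    using assms by (simp add: closedin_def)
  also have "\<dots> \<longleftrightarrow> (\<forall>x y. (x, y) \<in> topspace X \<times> topspace Y - Z \<longrightarrow>
      (\<exists>U V. openin X U \<and> openin Y V \<and> x \<in> U \<and> y \<in> V \<and> U \<times> V \<subseteq> topspace X \<times> topspace Y - Z))"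
    by (rule openin_prod_topology_alt)
  also have "\<dots> \<longleftrightarrow> ?R"
  proof -
    have "U \<times> V \<subseteq> topspace X \<times> topspace Y - Z \<longleftrightarrow> (U \<times> V) \<inter> Z = {}"
      if "openin X U" "openin Y V" for U V
    proof -
      have "U \<times> V \<subseteq> topspace X \<times> topspace Y"
        using openin_subset[OF that(1)] openin_subset[OF that(2)] by (rule Sigma_mono)
      then show ?thesis by blast
    qed
    then show ?thesis by (simp add: Ball_def imp_conjL cong: conj_cong)
  qed
  finally show ?thesis .
qed

lemma not_islimpt_iff: "\<not> z islimpt P \<longleftrightarrow> (\<exists>T. open T \<and> z \<in> T \<and> T \<inter> P \<subseteq> {z})"
  unfolding islimpt_def by blast

lemma discrete_subtopology_iff:
  fixes P :: "'a::topological_space set"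
  shows "subtopology euclidean P = discrete_topology P \<longleftrightarrow> (\<forall>p\<in>P. \<not> p islimpt P)"
proof -
  have "openin (subtopology euclidean P) {p} \<longleftrightarrow> \<not> p islimpt P" if "p \<in> P" for p
  proof -
    have "openin (subtopology euclidean P) {p} \<longleftrightarrow> (\<exists>T. open T \<and> {p} = T \<inter> P)"
      by (simp add: openin_subtopology)
    also have "\<dots> \<longleftrightarrow> (\<exists>T. open T \<and> p \<in> T \<and> T \<inter> P \<subseteq> {p})"
      using that by blast
    finally show ?thesis by (simp add: not_islimpt_iff)
  qed
  then show ?thesis
    using discrete_topology_unique[of P "subtopology euclidean P"] by (simp add: eq_commute)
qed

text \<open>Closed and discrete subsets are exactly the sets without limit points; this turns
  condition (3) into a pointwise statement.\<close>
lemma closed_discrete_iff_no_limpt: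
  fixes P :: "'a::topological_space set"
  shows "closed P \<and> subtopology euclidean P = discrete_topology P \<longleftrightarrow> (\<forall>z. \<not> z islimpt P)"
  using closed_limpt[of P] discrete_subtopology_iff[of P] by blast

lemma not_islimpt_prod_iff:
  fixes P :: "('a::topological_space \<times> 'b::topological_space) set"
  shows "\<not> (a, b) islimpt P \<longleftrightarrow>
    (\<exists>A B. open A \<and> open B \<and> a \<in> A \<and> b \<in> B \<and> (A \<times> B) \<inter> P \<subseteq> {(a, b)})"
proof
  assume "\<not> (a, b) islimpt P"
  then obtain T where T: "open T" "(a, b) \<in> T" "T \<inter> P \<subseteq> {(a, b)}"
    unfolding not_islimpt_iff by blast
  obtain A B where "open A" "open B" "(a, b) \<in> A \<times> B" "A \<times> B \<subseteq> T"
    using T(1,2) by (rule open_prod_elim)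
  with T(3) show "\<exists>A B. open A \<and> open B \<and> a \<in> A \<and> b \<in> B \<and> (A \<times> B) \<inter> P \<subseteq> {(a, b)}"
    by (intro exI[of _ A] exI[of _ B]) auto
next
  assume "\<exists>A B. open A \<and> open B \<and> a \<in> A \<and> b \<in> B \<and> (A \<times> B) \<inter> P \<subseteq> {(a, b)}"
  then show "\<not> (a, b) islimpt P"
    unfolding not_islimpt_iff by (metis mem_Times_iff fst_conv snd_conv open_Times)
qed

lemma remove_finite_exceptions:
  fixes f :: "'a \<Rightarrow> 'm::t1_space"
  assumes "open W" "b \<in> W" "finite {y. P y \<and> f y \<in> W}"
  shows "\<exists>W'. open W' \<and> b \<in> W' \<and> W' \<subseteq> W \<and> (\<forall>y. P y \<longrightarrow> f y \<in> W' \<longrightarrow> f y = b)"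
proof (intro exI conjI allI impI)
  let ?W' = "W - (f ` {y. P y \<and> f y \<in> W} - {b})"
  show "open ?W'" using assms(1,3) by (intro open_Diff finite_imp_closed) auto
  show "b \<in> ?W'" "?W' \<subseteq> W" using assms(2) by auto
  show "f y = b" if "P y" "f y \<in> ?W'" for y using that by auto
qed

lemma continuous_mult_box:
  fixes a b :: "'m::{topological_space, semigroup_mult}"
  assumes "continuous_map (prod_topology euclidean euclidean) euclidean (\<lambda>(u::'m, v). u * v)"
    and "open W" "a * b \<in> W"
  obtains A B where "open A" "open B" "a \<in> A" "b \<in> B" "\<And>u v. u \<in> A \<Longrightarrow> v \<in> B \<Longrightarrow> u * v \<in> W"
proof -
  have "open {z. (\<lambda>(u::'m, v). u * v) z \<in> W}"
    using openin_continuous_map_preimage[OF assms(1), of W] assms(2) by simp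
  moreover have "(a, b) \<in> {z. (\<lambda>(u::'m, v). u * v) z \<in> W}" using assms(3) by simp
  ultimately obtain A B where AB: "open A" "open B" "(a, b) \<in> A \<times> B"
      and box: "A \<times> B \<subseteq> {z. (\<lambda>(u::'m, v). u * v) z \<in> W}"
    by (rule open_prod_elim)
  have "u * v \<in> W" if "u \<in> A" "v \<in> B" for u v
    using subsetD[OF box, of "(u, v)"] that by simp
  then show thesis using AB by (intro that[of A B]) auto
qed

lemma alpha_open:
  fixes U :: "'d option set"
  shows "openin alpha_top U \<longleftrightarrow> (None \<in> U \<longrightarrow> finite (- U))"
proof -
  have "istopology (\<lambda>U::'d option set. None \<in> U \<longrightarrow> finite (- U))"
    unfolding istopology_def
  proof (intro conjI allI impI)
    fix \<K> :: "'d option set set"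
    assume "\<forall>K\<in>\<K>. None \<in> K \<longrightarrow> finite (- K)" "None \<in> \<Union>\<K>"
    then obtain K where "K \<in> \<K>" "finite (- K)" by blast
    moreover have "- \<Union>\<K> \<subseteq> - K" using \<open>K \<in> \<K>\<close> by blast
    ultimately show "finite (- \<Union>\<K>)" by (meson finite_subset)
  qed auto
  then have "openin alpha_top = (\<lambda>U::'d option set. None \<in> U \<longrightarrow> finite (- U))"
    unfolding alpha_top_def by (rule topology_inverse')
  then show ?thesis by simp
qed

lemma alpha_topspace: "topspace alpha_top = UNIV"
  using openin_subset[of alpha_top UNIV] by (auto simp: alpha_open)

lemma glue_topspace: "topspace (glue_top \<pi>) = glue_carrier \<pi>"
  by (simp add: glue_top_def alpha_topspace)

lemma glue_carrier_simps [simp]: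
  "(Some x, m) \<in> glue_carrier \<pi> \<longleftrightarrow> m = \<pi> x"
  "(None, m) \<in> glue_carrier \<pi>"
  by (auto simp: glue_carrier_def)

lemma glue_carrier_cases:
  assumes "s \<in> glue_carrier \<pi>"
  obtains x where "s = (Some x, \<pi> x)" | m where "s = (None, m)"
  using assms unfolding glue_carrier_def by auto

text \<open>The basic neighbourhoods of a point \<open>(None, m)\<close> of \<open>M\<close> inside \<open>D \<union>\<^sub>\<pi> M\<close>: all points with
  second coordinate in an open \<open>W \<ni> m\<close>, except the finitely many points of \<open>D\<close> indexed by \<open>F\<close>.\<close>
definition cobox :: "('d \<Rightarrow> 'm) \<Rightarrow> 'd set \<Rightarrow> 'm set \<Rightarrow> ('d option \<times> 'm) set" where
  "cobox \<pi> F W = glue_carrier \<pi> \<inter> ((- (Some ` F)) \<times> W)"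

lemma cobox_simps [simp]:
  "(Some y, m) \<in> cobox \<pi> F W \<longleftrightarrow> m = \<pi> y \<and> y \<notin> F \<and> m \<in> W"
  "(None, m) \<in> cobox \<pi> F W \<longleftrightarrow> m \<in> W"
  by (auto simp: cobox_def)

lemma openin_glue_top:
  "openin (glue_top \<pi>) U \<longleftrightarrow> (\<exists>T. openin (prod_topology alpha_top euclidean) T \<and> U = T \<inter> glue_carrier \<pi>)"
  by (simp add: glue_top_def openin_subtopology)

lemma openin_cobox:
  assumes "finite F" "open W"
  shows "openin (glue_top \<pi>) (cobox \<pi> F W)"
proof -
  have "openin (prod_topology alpha_top euclidean) ((- (Some ` F)) \<times> W)"
    using assms by (simp add: openin_prod_Times_iff alpha_open)
  then show ?thesis unfolding openin_glue_top cobox_def by (metis Int_commute)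
qed

lemma openin_glue_point: "openin (glue_top \<pi>) {(Some x, \<pi> x)}"
proof -
  have "openin (prod_topology alpha_top euclidean) ({Some x} \<times> UNIV)"
    by (simp add: openin_prod_Times_iff alpha_open)
  moreover have "{(Some x, \<pi> x)} = ({Some x} \<times> UNIV) \<inter> glue_carrier \<pi>"
    by (auto simp: glue_carrier_def)
  ultimately show ?thesis unfolding openin_glue_top by blast
qed

lemma closedin_glue_point: "closedin (glue_top \<pi>) {(Some c, \<pi> c)}"
proof -
  have "glue_carrier \<pi> - {(Some c, \<pi> c)} = cobox \<pi> {c} UNIV"
    unfolding cobox_def glue_carrier_def by auto
  then show ?thesis
    using openin_cobox[of "{c}" UNIV \<pi>] by (simp add: closedin_def glue_topspace)
qed

lemma glue_nhd_None:
  assumes "openin (glue_top \<pi>) U" "(None, m) \<in> U"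
  obtains F W where "finite F" "open W" "m \<in> W" "cobox \<pi> F W \<subseteq> U"
proof -
  obtain T where T: "openin (prod_topology alpha_top euclidean) T" "U = T \<inter> glue_carrier \<pi>"
    using assms(1) unfolding openin_glue_top by blast
  have "(None, m) \<in> T" using assms(2) T(2) by simp
  then obtain V W where VW: "openin alpha_top V" "openin euclidean W" "None \<in> V" "m \<in> W" "V \<times> W \<subseteq> T"
    using T(1) unfolding openin_prod_topology_alt by meson
  define F where "F = Some -` (- V)"
  have "finite F" unfolding F_def
    using VW(1,3) by (intro finite_vimageI) (auto simp: alpha_open)
  moreover have "- (Some ` F) \<subseteq> V"
  proof
    fix z assume "z \<in> - (Some ` F)"
    then show "z \<in> V" using VW(3) by (cases z) (auto simp: F_def)
  qed
  then have "cobox \<pi> F W \<subseteq> U"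
    unfolding cobox_def T(2) using VW(5) by blast
  ultimately show thesis using VW(2,4) that by (simp only: open_openin)
qed

definition glued_factors ::
  "('d::semigroup_mult \<Rightarrow> 'm) \<Rightarrow> 'd \<Rightarrow> (('d option \<times> 'm) \<times> ('d option \<times> 'm)) set" where
  "glued_factors \<pi> c = {((Some x, \<pi> x), (Some y, \<pi> y)) | x y. x * y = c}"

lemma glued_factors_subset: "glued_factors \<pi> c \<subseteq> topspace (glue_top \<pi>) \<times> topspace (glue_top \<pi>)"
  by (auto simp: glued_factors_def glue_topspace)

lemma glue_mult_simps [simp]:
  "glue_mult (Some x, a) (Some y, b) = (Some (x * y), a * b)"
  "glue_mult (None, a) t = (None, a * snd t)"
  "glue_mult s (None, b) = (None, snd s * b)"
  "snd (glue_mult s t) = snd s * snd t"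
  by (simp_all add: glue_mult_def split: option.split)

lemma glue_mult_in_carrier:
  assumes hom: "\<And>x y. \<pi> (x * y) = \<pi> x * \<pi> y"
    and "s \<in> glue_carrier \<pi>" "t \<in> glue_carrier \<pi>"
  shows "glue_mult s t \<in> glue_carrier \<pi>"
  using assms(2,3) by (auto elim!: glue_carrier_cases simp: hom)

lemma glue_mult_eq_Some_iff:
  assumes "s \<in> glue_carrier \<pi>" "t \<in> glue_carrier \<pi>"
  shows "fst (glue_mult s t) = Some c \<longleftrightarrow> (s, t) \<in> glued_factors \<pi> c"
  using assms by (auto elim!: glue_carrier_cases simp: glued_factors_def)

lemma continuous_map_glue_snd_mult:
  assumes topsg: "continuous_map (prod_topology euclidean euclidean) euclidean (\<lambda>(a::'m, b). a * b)"
  shows "continuous_map (prod_topology (glue_top \<pi>) (glue_top \<pi>)) euclidean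
           (\<lambda>(s, t). snd (glue_mult s t) :: 'm::{topological_space, semigroup_mult})"
proof -
  have snd_cont: "continuous_map (glue_top \<pi>) euclidean snd"
    unfolding glue_top_def by (intro continuous_map_from_subtopology continuous_map_snd)
  have "continuous_map (prod_topology (glue_top \<pi>) (glue_top \<pi>)) (prod_topology euclidean euclidean)
          (\<lambda>z. ((snd \<circ> fst) z, (snd \<circ> snd) z))"
    using continuous_map_compose[OF continuous_map_fst snd_cont]
      continuous_map_compose[OF continuous_map_snd snd_cont]
    by (intro continuous_map_pairedI)
  from continuous_map_compose[OF this topsg] show ?thesis
    by (simp add: o_def case_prod_unfold)
qed

text \<open>(1) \<open>\<Longrightarrow>\<close> (2): \<open>D\<^sub>c\<close> is the preimage of the closed point \<open>c\<close> under the multiplication.\<close>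
lemma continuous_imp_closed_glued_factors:
  assumes hom: "\<And>x y. \<pi> (x * y) = \<pi> x * \<pi> y"
    and cont: "continuous_map (prod_topology (glue_top \<pi>) (glue_top \<pi>)) (glue_top \<pi>)
                 (\<lambda>(s, t). glue_mult s t)"
  shows "closedin (prod_topology (glue_top \<pi>) (glue_top \<pi>)) (glued_factors \<pi> c)"
proof -
  let ?X = "prod_topology (glue_top \<pi>) (glue_top \<pi>)"
  have "glued_factors \<pi> c = {z \<in> topspace ?X. (\<lambda>(s, t). glue_mult s t) z \<in> {(Some c, \<pi> c)}}"
  proof (intro set_eqI iffI)
    fix z assume "z \<in> glued_factors \<pi> c"
    then obtain x y where "z = ((Some x, \<pi> x), (Some y, \<pi> y))" "x * y = c"
      unfolding glued_factors_def by blast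
    then show "z \<in> {z \<in> topspace ?X. (\<lambda>(s, t). glue_mult s t) z \<in> {(Some c, \<pi> c)}}"
      by (auto simp: glue_topspace hom[symmetric])
  next
    fix z assume z: "z \<in> {z \<in> topspace ?X. (\<lambda>(s, t). glue_mult s t) z \<in> {(Some c, \<pi> c)}}"
    then obtain s t where "z = (s, t)" "s \<in> glue_carrier \<pi>" "t \<in> glue_carrier \<pi>"
      by (auto simp: glue_topspace)
    with z show "z \<in> glued_factors \<pi> c"
      using glue_mult_eq_Some_iff[of s \<pi> t c] by auto
  qed
  then show ?thesis
    using closedin_continuous_map_preimage[OF cont closedin_glue_point] by simp
qed

text \<open>If all \<open>D\<^sub>c\<close> are closed, preimages of coboxes under the multiplication are open: such a preimage
  consists of the pairs whose \<open>M\<close>-product lies in \<open>W\<close>, minus the finitely many sets \<open>D\<^sub>c\<close>, \<open>c \<in> F\<close>.\<close>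
lemma openin_preimage_cobox:
  fixes \<pi> :: "'d::semigroup_mult \<Rightarrow> 'm::{topological_space, semigroup_mult}"
  assumes hom: "\<And>x y. \<pi> (x * y) = \<pi> x * \<pi> y"
    and topsg: "continuous_map (prod_topology euclidean euclidean) euclidean (\<lambda>(a::'m, b). a * b)"
    and closed: "\<And>c. closedin (prod_topology (glue_top \<pi>) (glue_top \<pi>)) (glued_factors \<pi> c)"
    and "finite F" "open W"
  shows "openin (prod_topology (glue_top \<pi>) (glue_top \<pi>))
           {w \<in> topspace (prod_topology (glue_top \<pi>) (glue_top \<pi>)). (\<lambda>(s, t). glue_mult s t) w \<in> cobox \<pi> F W}"
proof -
  let ?X = "prod_topology (glue_top \<pi>) (glue_top \<pi>)"
  let ?g = "\<lambda>(s, t). snd (glue_mult s t)"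
  have "(\<lambda>(s, t). glue_mult s t) w \<in> cobox \<pi> F W \<longleftrightarrow> ?g w \<in> W \<and> w \<notin> \<Union> (glued_factors \<pi> ` F)"
    if w_in: "w \<in> topspace ?X" for w
  proof -
    obtain s t where st: "w = (s, t)" "s \<in> glue_carrier \<pi>" "t \<in> glue_carrier \<pi>"
      using w_in by (cases w) (simp add: glue_topspace)
    then have "glue_mult s t \<in> cobox \<pi> F W \<longleftrightarrow> fst (glue_mult s t) \<notin> Some ` F \<and> snd (glue_mult s t) \<in> W"
      using glue_mult_in_carrier[OF hom st(2,3)] by (auto simp: cobox_def mem_Times_iff)
    also have "fst (glue_mult s t) \<notin> Some ` F \<longleftrightarrow> (s, t) \<notin> \<Union> (glued_factors \<pi> ` F)"
      using glue_mult_eq_Some_iff[OF st(2,3)] by blast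
    finally show ?thesis using st(1) by auto
  qed
  then have "{w \<in> topspace ?X. (\<lambda>(s, t). glue_mult s t) w \<in> cobox \<pi> F W}
             = {w \<in> topspace ?X. ?g w \<in> W} - \<Union> (glued_factors \<pi> ` F)"
    by blast
  moreover have "openin ?X ({w \<in> topspace ?X. ?g w \<in> W} - \<Union> (glued_factors \<pi> ` F))"
  proof (rule openin_diff)
    have "openin euclidean W" using \<open>open W\<close> by (simp only: open_openin)
    then show "openin ?X {w \<in> topspace ?X. ?g w \<in> W}"
      by (rule openin_continuous_map_preimage[OF continuous_map_glue_snd_mult[OF topsg]])
    show "closedin ?X (\<Union> (glued_factors \<pi> ` F))"
      using \<open>finite F\<close> closed by (intro closedin_Union) auto
  qed
  ultimately show ?thesis by simp
qed

text \<open>At a pair whose product lies in \<open>D\<close> both factors are isolated.  If the product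
  \<open>(None, m)\<close> lies in \<open>M\<close>, every neighbourhood of it contains a cobox, whose preimage is open.\<close>
lemma closed_glued_factors_imp_continuous:
  fixes \<pi> :: "'d::semigroup_mult \<Rightarrow> 'm::{topological_space, semigroup_mult}"
  assumes hom: "\<And>x y. \<pi> (x * y) = \<pi> x * \<pi> y"
    and topsg: "continuous_map (prod_topology euclidean euclidean) euclidean (\<lambda>(a::'m, b). a * b)"
    and closed: "\<And>c. closedin (prod_topology (glue_top \<pi>) (glue_top \<pi>)) (glued_factors \<pi> c)"
  shows "continuous_map (prod_topology (glue_top \<pi>) (glue_top \<pi>)) (glue_top \<pi>)
           (\<lambda>(s, t). glue_mult s t)"
  unfolding continuous_map_def
proof (intro conjI allI impI)
  let ?X = "prod_topology (glue_top \<pi>) (glue_top \<pi>)"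
  let ?f = "\<lambda>(s, t). glue_mult s t"
  show "?f \<in> topspace ?X \<rightarrow> topspace (glue_top \<pi>)"
    using glue_mult_in_carrier[OF hom] by (auto simp: glue_topspace)
  fix V assume V: "openin (glue_top \<pi>) V"
  show "openin ?X {z \<in> topspace ?X. ?f z \<in> V}"
  proof (subst openin_subopen, intro ballI)
    fix z assume z: "z \<in> {z \<in> topspace ?X. ?f z \<in> V}"
    then obtain s t where st: "z = (s, t)" "s \<in> glue_carrier \<pi>" "t \<in> glue_carrier \<pi>"
      by (auto simp: glue_topspace)
    show "\<exists>N. openin ?X N \<and> z \<in> N \<and> N \<subseteq> {z \<in> topspace ?X. ?f z \<in> V}"
    proof (cases "fst (glue_mult s t)")
      case (Some c)
      then have "(s, t) \<in> glued_factors \<pi> c"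
        using glue_mult_eq_Some_iff[OF st(2,3)] by blast
      then obtain x y where xy: "s = (Some x, \<pi> x)" "t = (Some y, \<pi> y)"
        unfolding glued_factors_def by blast
      have "openin ?X ({s} \<times> {t})"
        unfolding openin_prod_Times_iff xy by (simp add: openin_glue_point)
      then show ?thesis using z st(1) by (intro exI[of _ "{s} \<times> {t}"]) auto
    next
      case None
      then have prod: "glue_mult s t = (None, snd s * snd t)"
        by (metis glue_mult_simps(4) prod.collapse)
      then have "(None, snd s * snd t) \<in> V"
        using z st(1) by simp
      with V obtain F W where FW: "finite F" "open W" "snd s * snd t \<in> W" "cobox \<pi> F W \<subseteq> V"
        by (rule glue_nhd_None)
      let ?N = "{w \<in> topspace ?X. ?f w \<in> cobox \<pi> F W}"
      have "openin ?X ?N" by (rule openin_preimage_cobox[OF hom topsg closed FW(1,2)])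
      moreover have "z \<in> ?N" using z st(1) prod FW(3) by simp
      moreover have "?N \<subseteq> {z \<in> topspace ?X. ?f z \<in> V}" using FW(4) by blast
      ultimately show ?thesis by blast
    qed
  qed
qed

text \<open>The three ways a point of \<open>S \<times> S\<close> outside \<open>D \<times> D\<close> can be kept away from \<open>D\<^sub>c\<close>, phrased in
  terms of \<open>D\<close> and \<open>M\<close>: a point \<open>(x, b)\<close> with \<open>b \<in> M\<close>, a point \<open>(a, y)\<close> with \<open>a \<in> M\<close>, and a
  point \<open>(a, b)\<close> of \<open>M \<times> M\<close>.\<close>
definition right_separated :: "('d::semigroup_mult \<Rightarrow> 'm::topological_space) \<Rightarrow> 'd \<Rightarrow> bool" where
  "right_separated \<pi> c \<longleftrightarrow> (\<forall>x b. \<exists>W. open W \<and> b \<in> W \<and> finite {y. x * y = c \<and> \<pi> y \<in> W})"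

definition left_separated :: "('d::semigroup_mult \<Rightarrow> 'm::topological_space) \<Rightarrow> 'd \<Rightarrow> bool" where
  "left_separated \<pi> c \<longleftrightarrow> (\<forall>a y. \<exists>W. open W \<and> a \<in> W \<and> finite {x. x * y = c \<and> \<pi> x \<in> W})"

definition far_separated :: "('d::semigroup_mult \<Rightarrow> 'm::topological_space) \<Rightarrow> 'd \<Rightarrow> bool" where
  "far_separated \<pi> c \<longleftrightarrow> (\<forall>a b. \<exists>F G A B. finite F \<and> finite G \<and> open A \<and> open B \<and> a \<in> A \<and> b \<in> B \<and>
     (\<forall>x y. x * y = c \<longrightarrow> \<pi> x \<in> A \<longrightarrow> \<pi> y \<in> B \<longrightarrow> x \<in> F \<or> y \<in> G))"

lemma closed_glued_factors_box:
  assumes "closedin (prod_topology (glue_top \<pi>) (glue_top \<pi>)) (glued_factors \<pi> c)"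
    and "s \<in> glue_carrier \<pi>" "t \<in> glue_carrier \<pi>" "fst s = None \<or> fst t = None"
  obtains U V where "openin (glue_top \<pi>) U" "openin (glue_top \<pi>) V" "s \<in> U" "t \<in> V"
    "\<And>x y. x * y = c \<Longrightarrow> (Some x, \<pi> x) \<in> U \<Longrightarrow> (Some y, \<pi> y) \<in> V \<Longrightarrow> False"
proof -
  have "(s, t) \<notin> glued_factors \<pi> c"
    using assms(4) by (auto simp: glued_factors_def)
  moreover have "\<forall>s\<in>topspace (glue_top \<pi>). \<forall>t\<in>topspace (glue_top \<pi>). (s, t) \<notin> glued_factors \<pi> c \<longrightarrow>
      (\<exists>U V. openin (glue_top \<pi>) U \<and> openin (glue_top \<pi>) V \<and> s \<in> U \<and> t \<in> V \<and>
             (U \<times> V) \<inter> glued_factors \<pi> c = {})"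
    using assms(1) by (simp only: closedin_prod_iff_boxes[OF glued_factors_subset])
  ultimately obtain U V where UV: "openin (glue_top \<pi>) U" "openin (glue_top \<pi>) V" "s \<in> U" "t \<in> V"
      and disjoint: "(U \<times> V) \<inter> glued_factors \<pi> c = {}"
    using assms(2,3) unfolding glue_topspace by meson
  show thesis
  proof (rule that[OF UV])
    fix x y assume "x * y = c" "(Some x, \<pi> x) \<in> U" "(Some y, \<pi> y) \<in> V"
    then have "((Some x, \<pi> x), (Some y, \<pi> y)) \<in> (U \<times> V) \<inter> glued_factors \<pi> c"
      by (auto simp: glued_factors_def)
    then show False using disjoint by blast
  qed
qed

text \<open>Closedness of \<open>D\<^sub>c\<close> gives the three separation properties, by reading off coboxes inside
  the separating box neighbourhoods.\<close>
lemma closed_glued_factors_imp_separated: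
  assumes "closedin (prod_topology (glue_top \<pi>) (glue_top \<pi>)) (glued_factors \<pi> c)"
  shows "right_separated \<pi> c" "left_separated \<pi> c" "far_separated \<pi> c"
proof -
  show "right_separated \<pi> c" unfolding right_separated_def
  proof (intro allI)
    fix x b
    obtain U V where UV: "openin (glue_top \<pi>) U" "openin (glue_top \<pi>) V" "(Some x, \<pi> x) \<in> U" "(None, b) \<in> V"
        "\<And>x' y. x' * y = c \<Longrightarrow> (Some x', \<pi> x') \<in> U \<Longrightarrow> (Some y, \<pi> y) \<in> V \<Longrightarrow> False"
      by (rule closed_glued_factors_box[OF assms]) auto
    obtain F W where FW: "finite F" "open W" "b \<in> W" "cobox \<pi> F W \<subseteq> V"
      using UV(2,4) by (rule glue_nhd_None)
    have "y \<in> F" if "x * y = c" "\<pi> y \<in> W" for y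
    proof (rule ccontr)
      assume "y \<notin> F"
      then have "(Some y, \<pi> y) \<in> V" using FW(4) that(2) by auto
      then show False by (rule UV(5)[OF that(1) UV(3)])
    qed
    then have "{y. x * y = c \<and> \<pi> y \<in> W} \<subseteq> F" by blast
    then show "\<exists>W. open W \<and> b \<in> W \<and> finite {y. x * y = c \<and> \<pi> y \<in> W}"
      using FW(1-3) finite_subset by blast
  qed
  show "left_separated \<pi> c" unfolding left_separated_def
  proof (intro allI)
    fix a y
    obtain U V where UV: "openin (glue_top \<pi>) U" "openin (glue_top \<pi>) V" "(None, a) \<in> U" "(Some y, \<pi> y) \<in> V"
        "\<And>x y'. x * y' = c \<Longrightarrow> (Some x, \<pi> x) \<in> U \<Longrightarrow> (Some y', \<pi> y') \<in> V \<Longrightarrow> False"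
      by (rule closed_glued_factors_box[OF assms]) auto
    obtain F W where FW: "finite F" "open W" "a \<in> W" "cobox \<pi> F W \<subseteq> U"
      using UV(1,3) by (rule glue_nhd_None)
    have "x \<in> F" if "x * y = c" "\<pi> x \<in> W" for x
    proof (rule ccontr)
      assume "x \<notin> F"
      then have "(Some x, \<pi> x) \<in> U" using FW(4) that(2) by auto
      then show False by (rule UV(5)[OF that(1) _ UV(4)])
    qed
    then have "{x. x * y = c \<and> \<pi> x \<in> W} \<subseteq> F" by blast
    then show "\<exists>W. open W \<and> a \<in> W \<and> finite {x. x * y = c \<and> \<pi> x \<in> W}"
      using FW(1-3) finite_subset by blast
  qed
  show "far_separated \<pi> c" unfolding far_separated_def
  proof (intro allI)
    fix a b
    obtain U V where UV: "openin (glue_top \<pi>) U" "openin (glue_top \<pi>) V" "(None, a) \<in> U" "(None, b) \<in> V"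
        "\<And>x y. x * y = c \<Longrightarrow> (Some x, \<pi> x) \<in> U \<Longrightarrow> (Some y, \<pi> y) \<in> V \<Longrightarrow> False"
      by (rule closed_glued_factors_box[OF assms]) auto
    obtain F A where FA: "finite F" "open A" "a \<in> A" "cobox \<pi> F A \<subseteq> U"
      using UV(1,3) by (rule glue_nhd_None)
    obtain G B where GB: "finite G" "open B" "b \<in> B" "cobox \<pi> G B \<subseteq> V"
      using UV(2,4) by (rule glue_nhd_None)
    have "x \<in> F \<or> y \<in> G" if "x * y = c" "\<pi> x \<in> A" "\<pi> y \<in> B" for x y
    proof (rule ccontr)
      assume "\<not> (x \<in> F \<or> y \<in> G)"
      then have "(Some x, \<pi> x) \<in> U" "(Some y, \<pi> y) \<in> V"
        using FA(4) GB(4) that(2,3) by auto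
      then show False using UV(5)[OF that(1)] by blast
    qed
    then show "\<exists>F G A B. finite F \<and> finite G \<and> open A \<and> open B \<and> a \<in> A \<and> b \<in> B \<and>
        (\<forall>x y. x * y = c \<longrightarrow> \<pi> x \<in> A \<longrightarrow> \<pi> y \<in> B \<longrightarrow> x \<in> F \<or> y \<in> G)"
      using FA(1-3) GB(1-3) by blast
  qed
qed

text \<open>Conversely the three separation properties provide, for every point outside \<open>D\<^sub>c\<close>, a box of
  singletons and coboxes missing \<open>D\<^sub>c\<close>; so (2) says exactly that they hold for every \<open>c\<close>.\<close>
lemma separated_imp_closed_glued_factors:
  assumes right: "right_separated \<pi> c" and left: "left_separated \<pi> c" and far: "far_separated \<pi> c"
  shows "closedin (prod_topology (glue_top \<pi>) (glue_top \<pi>)) (glued_factors \<pi> c)"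
  unfolding closedin_prod_iff_boxes[OF glued_factors_subset] glue_topspace
proof (intro ballI impI)
  fix s t assume st: "s \<in> glue_carrier \<pi>" "t \<in> glue_carrier \<pi>" "(s, t) \<notin> glued_factors \<pi> c"
  let ?avoid = "\<lambda>U V. openin (glue_top \<pi>) U \<and> openin (glue_top \<pi>) V \<and> s \<in> U \<and> t \<in> V \<and>
                      (U \<times> V) \<inter> glued_factors \<pi> c = {}"
  show "\<exists>U V. ?avoid U V"
  proof (cases rule: glue_carrier_cases[OF st(1)]; cases rule: glue_carrier_cases[OF st(2)])
    fix x y assume "s = (Some x, \<pi> x)" "t = (Some y, \<pi> y)"
    with st(3) have "?avoid {s} {t}" by (auto simp: openin_glue_point)
    then show ?thesis by blast
  next
    fix x b assume s: "s = (Some x, \<pi> x)" and t: "t = (None, b)"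
    obtain W where "open W" "b \<in> W" "finite {y. x * y = c \<and> \<pi> y \<in> W}"
      using right unfolding right_separated_def by blast
    then have "?avoid {s} (cobox \<pi> {y. x * y = c \<and> \<pi> y \<in> W} W)"
      using s t by (auto simp: openin_glue_point openin_cobox glued_factors_def)
    then show ?thesis by blast
  next
    fix a y assume s: "s = (None, a)" and t: "t = (Some y, \<pi> y)"
    obtain W where "open W" "a \<in> W" "finite {x. x * y = c \<and> \<pi> x \<in> W}"
      using left unfolding left_separated_def by blast
    then have "?avoid (cobox \<pi> {x. x * y = c \<and> \<pi> x \<in> W} W) {t}"
      using s t by (auto simp: openin_glue_point openin_cobox glued_factors_def)
    then show ?thesis by blast
  next
    fix a b assume s: "s = (None, a)" and t: "t = (None, b)"
    obtain F G A B where FGAB: "finite F" "finite G" "open A" "open B" "a \<in> A" "b \<in> B"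
        and sep: "\<And>x y. x * y = c \<Longrightarrow> \<pi> x \<in> A \<Longrightarrow> \<pi> y \<in> B \<Longrightarrow> x \<in> F \<or> y \<in> G"
      using far unfolding far_separated_def by meson
    have "(cobox \<pi> F A \<times> cobox \<pi> G B) \<inter> glued_factors \<pi> c = {}"
      using sep unfolding glued_factors_def by fastforce
    with FGAB have "?avoid (cobox \<pi> F A) (cobox \<pi> G B)"
      using s t by (auto simp: openin_cobox)
    then show ?thesis by blast
  qed
qed

definition factor_image :: "('d::semigroup_mult \<Rightarrow> 'm) \<Rightarrow> 'd \<Rightarrow> ('m \<times> 'm) set" where
  "factor_image \<pi> c = {(\<pi> x, \<pi> y) | x y. x * y = c}"

lemma not_islimpt_factor_image_iff:
  "\<not> (a, b) islimpt factor_image \<pi> c \<longleftrightarrow>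
    (\<exists>A B. open A \<and> open B \<and> a \<in> A \<and> b \<in> B \<and>
       (\<forall>x y. x * y = c \<longrightarrow> \<pi> x \<in> A \<longrightarrow> \<pi> y \<in> B \<longrightarrow> \<pi> x = a \<and> \<pi> y = b))"
proof -
  have "(A \<times> B) \<inter> factor_image \<pi> c \<subseteq> {(a, b)} \<longleftrightarrow>
        (\<forall>x y. x * y = c \<longrightarrow> \<pi> x \<in> A \<longrightarrow> \<pi> y \<in> B \<longrightarrow> \<pi> x = a \<and> \<pi> y = b)" for A B
    unfolding factor_image_def by blast
  then show ?thesis by (simp add: not_islimpt_prod_iff)
qed

lemma right_separated_isolating:
  fixes \<pi> :: "'d::semigroup_mult \<Rightarrow> 'm::t1_space"
  assumes "right_separated \<pi> c"
  shows "\<exists>W. open W \<and> b \<in> W \<and> (\<forall>y. x * y = c \<longrightarrow> \<pi> y \<in> W \<longrightarrow> \<pi> y = b)"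
proof -
  obtain W where "open W" "b \<in> W" "finite {y. x * y = c \<and> \<pi> y \<in> W}"
    using assms unfolding right_separated_def by blast
  from remove_finite_exceptions[OF this] show ?thesis by blast
qed

lemma left_separated_isolating:
  fixes \<pi> :: "'d::semigroup_mult \<Rightarrow> 'm::t1_space"
  assumes "left_separated \<pi> c"
  shows "\<exists>W. open W \<and> a \<in> W \<and> (\<forall>x. x * y = c \<longrightarrow> \<pi> x \<in> W \<longrightarrow> \<pi> x = a)"
proof -
  obtain W where "open W" "a \<in> W" "finite {x. x * y = c \<and> \<pi> x \<in> W}"
    using assms unfolding left_separated_def by blast
  from remove_finite_exceptions[OF this] show ?thesis by blast
qed

text \<open>Given \<open>(a, b)\<close>, far separation leaves finitely many exceptional factors
  \<open>x \<in> F\<close>, \<open>y \<in> G\<close>; right and left separation control the partners of each of them, and the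
  \<open>T\<^sub>1\<close> property removes the finitely many values \<open>\<pi> x\<close>, \<open>\<pi> y\<close> different from \<open>a\<close>, \<open>b\<close>.\<close>
lemma separated_imp_no_limpt:
  fixes \<pi> :: "'d::semigroup_mult \<Rightarrow> 'm::t1_space"
  assumes right: "right_separated \<pi> c" and left: "left_separated \<pi> c" and far: "far_separated \<pi> c"
  shows "\<not> z islimpt factor_image \<pi> c"
proof -
  obtain a b where z: "z = (a, b)" by fastforce
  obtain F G A B where FGAB: "finite F" "finite G" "open A" "open B" "a \<in> A" "b \<in> B"
      and sep: "\<And>x y. x * y = c \<Longrightarrow> \<pi> x \<in> A \<Longrightarrow> \<pi> y \<in> B \<Longrightarrow> x \<in> F \<or> y \<in> G"
    using far unfolding far_separated_def by meson
  from choice[OF allI[OF right_separated_isolating[OF right]]] obtain Bx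
    where Bx: "\<forall>x. open (Bx x) \<and> b \<in> Bx x \<and> (\<forall>y. x * y = c \<longrightarrow> \<pi> y \<in> Bx x \<longrightarrow> \<pi> y = b)"
    by (rule exE)
  from choice[OF allI[OF left_separated_isolating[OF left]]] obtain Ay
    where Ay: "\<forall>y. open (Ay y) \<and> a \<in> Ay y \<and> (\<forall>x. x * y = c \<longrightarrow> \<pi> x \<in> Ay y \<longrightarrow> \<pi> x = a)"
    by (rule exE)
  have "open (A \<inter> (\<Inter>y\<in>G. Ay y))" using FGAB(2,3) Ay by (intro open_Int open_INT) auto
  moreover have "a \<in> A \<inter> (\<Inter>y\<in>G. Ay y)" using FGAB(5) Ay by blast
  moreover have "finite {x. x \<in> F \<and> \<pi> x \<in> A \<inter> (\<Inter>y\<in>G. Ay y)}" using FGAB(1) by simp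
  ultimately have "\<exists>A'. open A' \<and> a \<in> A' \<and> A' \<subseteq> A \<inter> (\<Inter>y\<in>G. Ay y) \<and>
      (\<forall>x. x \<in> F \<longrightarrow> \<pi> x \<in> A' \<longrightarrow> \<pi> x = a)"
    by (rule remove_finite_exceptions)
  then obtain A' where A': "open A'" "a \<in> A'" "A' \<subseteq> A \<inter> (\<Inter>y\<in>G. Ay y)"
      "\<forall>x. x \<in> F \<longrightarrow> \<pi> x \<in> A' \<longrightarrow> \<pi> x = a"
    by blast
  have "open (B \<inter> (\<Inter>x\<in>F. Bx x))" using FGAB(1,4) Bx by (intro open_Int open_INT) auto
  moreover have "b \<in> B \<inter> (\<Inter>x\<in>F. Bx x)" using FGAB(6) Bx by blast
  moreover have "finite {y. y \<in> G \<and> \<pi> y \<in> B \<inter> (\<Inter>x\<in>F. Bx x)}" using FGAB(2) by simp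
  ultimately have "\<exists>B'. open B' \<and> b \<in> B' \<and> B' \<subseteq> B \<inter> (\<Inter>x\<in>F. Bx x) \<and>
      (\<forall>y. y \<in> G \<longrightarrow> \<pi> y \<in> B' \<longrightarrow> \<pi> y = b)"
    by (rule remove_finite_exceptions)
  then obtain B' where B': "open B'" "b \<in> B'" "B' \<subseteq> B \<inter> (\<Inter>x\<in>F. Bx x)"
      "\<forall>y. y \<in> G \<longrightarrow> \<pi> y \<in> B' \<longrightarrow> \<pi> y = b"
    by blast
  have "\<pi> x = a \<and> \<pi> y = b" if xy: "x * y = c" "\<pi> x \<in> A'" "\<pi> y \<in> B'" for x y
  proof -
    have "\<pi> x \<in> A" "\<pi> y \<in> B" using xy(2,3) A'(3) B'(3) by auto
    then consider "x \<in> F" | "y \<in> G" using sep[OF xy(1)] by blast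
    then show ?thesis
    proof cases
      case 1
      then have "\<pi> y \<in> Bx x" using xy(3) B'(3) by blast
      then show ?thesis using 1 A'(4) Bx xy(1,2) by blast
    next
      case 2
      then have "\<pi> x \<in> Ay y" using xy(2) A'(3) by blast
      then show ?thesis using 2 B'(4) Ay xy(1,3) by blast
    qed
  qed
  then show ?thesis
    unfolding z not_islimpt_factor_image_iff using A'(1,2) B'(1,2) by blast
qed

lemma resolvable_fibres:
  assumes "finitely_resolvable \<pi>"
  shows "finite {y. x * y = c \<and> \<pi> y = b}" "finite {x. x * y = c \<and> \<pi> x = a}"
proof -
  let ?R = "\<lambda>a b. {(x, y). \<pi> x = a \<and> \<pi> y = b \<and> x * y = c}"
  have "{y. x * y = c \<and> \<pi> y = b} \<subseteq> snd ` ?R (\<pi> x) b"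
  proof
    fix y assume "y \<in> {y. x * y = c \<and> \<pi> y = b}"
    then have "(x, y) \<in> ?R (\<pi> x) b" by simp
    then show "y \<in> snd ` ?R (\<pi> x) b" by (rule rev_image_eqI) simp
  qed
  moreover have "{x. x * y = c \<and> \<pi> x = a} \<subseteq> fst ` ?R a (\<pi> y)"
  proof
    fix x assume "x \<in> {x. x * y = c \<and> \<pi> x = a}"
    then have "(x, y) \<in> ?R a (\<pi> y)" by simp
    then show "x \<in> fst ` ?R a (\<pi> y)" by (rule rev_image_eqI) simp
  qed
  moreover have "finite (?R a b)" for a b
    using assms unfolding finitely_resolvable_def by blast
  ultimately show "finite {y. x * y = c \<and> \<pi> y = b}" "finite {x. x * y = c \<and> \<pi> x = a}"
    by (meson finite_imageI finite_subset)+
qed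

text \<open>(3) \<open>\<Longrightarrow>\<close> (2) for finitely resolvable \<open>\<pi>\<close>: the factorisations mapping to a fixed point of
  \<open>M \<times> M\<close> are the finitely many exceptions needed in the separation properties.\<close>
lemma no_limpt_imp_separated:
  assumes fr: "finitely_resolvable \<pi>" and no_limpt: "\<And>z. \<not> z islimpt factor_image \<pi> c"
  shows "right_separated \<pi> c" "left_separated \<pi> c" "far_separated \<pi> c"
proof -
  have isolated: "\<exists>A B. open A \<and> open B \<and> a \<in> A \<and> b \<in> B \<and>
       (\<forall>x y. x * y = c \<longrightarrow> \<pi> x \<in> A \<longrightarrow> \<pi> y \<in> B \<longrightarrow> \<pi> x = a \<and> \<pi> y = b)" for a b
    using no_limpt[of "(a, b)"] unfolding not_islimpt_factor_image_iff .
  show "right_separated \<pi> c" unfolding right_separated_def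
  proof (intro allI)
    fix x b
    obtain A B where AB: "open B" "\<pi> x \<in> A" "b \<in> B"
        "\<forall>x' y. x' * y = c \<longrightarrow> \<pi> x' \<in> A \<longrightarrow> \<pi> y \<in> B \<longrightarrow> \<pi> x' = \<pi> x \<and> \<pi> y = b"
      using isolated[of "\<pi> x" b] by blast
    have "{y. x * y = c \<and> \<pi> y \<in> B} \<subseteq> {y. x * y = c \<and> \<pi> y = b}" using AB(2,4) by blast
    then show "\<exists>W. open W \<and> b \<in> W \<and> finite {y. x * y = c \<and> \<pi> y \<in> W}"
      using AB(1,3) finite_subset[OF _ resolvable_fibres(1)[OF fr]] by blast
  qed
  show "left_separated \<pi> c" unfolding left_separated_def
  proof (intro allI)
    fix a y
    obtain A B where AB: "open A" "a \<in> A" "\<pi> y \<in> B"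
        "\<forall>x y'. x * y' = c \<longrightarrow> \<pi> x \<in> A \<longrightarrow> \<pi> y' \<in> B \<longrightarrow> \<pi> x = a \<and> \<pi> y' = \<pi> y"
      using isolated[of a "\<pi> y"] by blast
    have "{x. x * y = c \<and> \<pi> x \<in> A} \<subseteq> {x. x * y = c \<and> \<pi> x = a}" using AB(3,4) by blast
    then show "\<exists>W. open W \<and> a \<in> W \<and> finite {x. x * y = c \<and> \<pi> x \<in> W}"
      using AB(1,2) finite_subset[OF _ resolvable_fibres(2)[OF fr]] by blast
  qed
  show "far_separated \<pi> c" unfolding far_separated_def
  proof (intro allI)
    fix a b
    let ?R = "{(x, y). \<pi> x = a \<and> \<pi> y = b \<and> x * y = c}"
    obtain A B where AB: "open A" "open B" "a \<in> A" "b \<in> B"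
        "\<forall>x y. x * y = c \<longrightarrow> \<pi> x \<in> A \<longrightarrow> \<pi> y \<in> B \<longrightarrow> \<pi> x = a \<and> \<pi> y = b"
      using isolated[of a b] by blast
    have "x \<in> fst ` ?R" if "x * y = c" "\<pi> x \<in> A" "\<pi> y \<in> B" for x y
    proof -
      have "(x, y) \<in> ?R" using AB(5) that by auto
      then show ?thesis by (rule rev_image_eqI) simp
    qed
    moreover have "finite (fst ` ?R)"
      using fr unfolding finitely_resolvable_def by simp
    ultimately show "\<exists>F G A B. finite F \<and> finite G \<and> open A \<and> open B \<and> a \<in> A \<and> b \<in> B \<and>
        (\<forall>x y. x * y = c \<longrightarrow> \<pi> x \<in> A \<longrightarrow> \<pi> y \<in> B \<longrightarrow> x \<in> F \<or> y \<in> G)"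
      using AB(1-4) by blast
  qed
qed

lemma factors_outside_ideal:
  assumes "two_sided_ideal (- R)" "a * b \<in> R"
  shows "a \<in> R" "b \<in> R"
proof -
  have "a * b \<in> - R" if "a \<notin> R \<or> b \<notin> R"
    using assms(1) that unfolding two_sided_ideal_def by (metis ComplI)
  then show "a \<in> R" "b \<in> R" using assms(2) by auto
qed

text \<open>If \<open>ab = \<pi>(c)\<close> then \<open>a, b \<in> \<pi>(D)\<close> by the ideal property and they are isolated
  in \<open>\<pi>(D)\<close>; otherwise continuity of the multiplication keeps products near \<open>ab\<close> away from \<open>\<pi>(c)\<close>.\<close>
lemma discrete_ideal_imp_no_limpt:
  fixes \<pi> :: "'d::semigroup_mult \<Rightarrow> 'm::{t1_space, semigroup_mult}"
  assumes hom: "\<And>x y. \<pi> (x * y) = \<pi> x * \<pi> y"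
    and topsg: "continuous_map (prod_topology euclidean euclidean) euclidean (\<lambda>(a::'m, b). a * b)"
    and discrete: "subtopology (euclidean::'m topology) (range \<pi>) = discrete_topology (range \<pi>)"
    and ideal: "two_sided_ideal (- range \<pi>)"
  shows "\<not> z islimpt factor_image \<pi> c"
proof -
  obtain a b where z: "z = (a, b)" by fastforce
  have "\<exists>A B. open A \<and> open B \<and> a \<in> A \<and> b \<in> B \<and>
       (\<forall>x y. x * y = c \<longrightarrow> \<pi> x \<in> A \<longrightarrow> \<pi> y \<in> B \<longrightarrow> \<pi> x = a \<and> \<pi> y = b)"
  proof (cases "a * b = \<pi> c")
    case True
    then have "a * b \<in> range \<pi>" by simp
    then have "a \<in> range \<pi>" "b \<in> range \<pi>"
      by (rule factors_outside_ideal[OF ideal])+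
    moreover have "\<exists>U. open U \<and> p \<in> U \<and> U \<inter> range \<pi> \<subseteq> {p}" if "p \<in> range \<pi>" for p
      using discrete that unfolding discrete_subtopology_iff not_islimpt_iff by blast
    ultimately obtain A B where "open A" "a \<in> A" "A \<inter> range \<pi> \<subseteq> {a}"
        "open B" "b \<in> B" "B \<inter> range \<pi> \<subseteq> {b}"
      by meson
    then show ?thesis by (intro exI[of _ A] exI[of _ B]) blast
  next
    case False
    obtain A B where AB: "open A" "open B" "a \<in> A" "b \<in> B"
        and avoid: "\<And>u v. u \<in> A \<Longrightarrow> v \<in> B \<Longrightarrow> u * v \<in> - {\<pi> c}"
      using continuous_mult_box[OF topsg, of "- {\<pi> c}" a b] False by auto
    have "\<not> (x * y = c \<and> \<pi> x \<in> A \<and> \<pi> y \<in> B)" for x y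
    proof
      assume xy: "x * y = c \<and> \<pi> x \<in> A \<and> \<pi> y \<in> B"
      then have "\<pi> x * \<pi> y \<in> - {\<pi> c}" using avoid by blast
      then show False using xy hom[of x y] by simp
    qed
    then show ?thesis using AB by blast
  qed
  then show ?thesis unfolding z not_islimpt_factor_image_iff .
qed

theorem theorem3p2:
  fixes \<pi> :: "'d::semigroup_mult \<Rightarrow> 'm::{t2_space, semigroup_mult}"
  assumes hom: "\<And>x y. \<pi> (x * y) = \<pi> x * \<pi> y"
    and topsg: "continuous_map (prod_topology euclidean euclidean) euclidean (\<lambda>(a::'m, b). a * b)"
  defines "C1 \<equiv> continuous_map (prod_topology (glue_top \<pi>) (glue_top \<pi>)) (glue_top \<pi>)
                   (\<lambda>(s, t). glue_mult s t)"
    and "C2 \<equiv> (\<forall>c. closedin (prod_topology (glue_top \<pi>) (glue_top \<pi>))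
                   {((Some x, \<pi> x), (Some y, \<pi> y)) | x y. x * y = c})"
    and "C3 \<equiv> (\<forall>c. closedin (prod_topology (euclidean::'m topology) (euclidean::'m topology))
                       {(\<pi> x, \<pi> y) | x y. x * y = c}
                  \<and> subtopology (prod_topology euclidean euclidean) {(\<pi> x, \<pi> y) | x y. x * y = c}
                      = discrete_topology {(\<pi> x, \<pi> y) | x y. x * y = c})"
    and "C4 \<equiv> (subtopology (euclidean::'m topology) (range \<pi>) = discrete_topology (range \<pi>)
               \<and> two_sided_ideal (- range \<pi>))"
  shows "(C1 \<longleftrightarrow> C2) \<and> (finitely_resolvable \<pi> \<longrightarrow> (C1 \<longleftrightarrow> C3) \<and> (C4 \<longrightarrow> C1))"
proof -
  have C2_iff: "C2 \<longleftrightarrow> (\<forall>c. closedin (prod_topology (glue_top \<pi>) (glue_top \<pi>)) (glued_factors \<pi> c))"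
    unfolding C2_def glued_factors_def ..
  have C3_iff: "C3 \<longleftrightarrow> (\<forall>c z. \<not> z islimpt factor_image \<pi> c)"
    unfolding C3_def factor_image_def[symmetric] prod_topology_euclidean closed_closedin[symmetric]
      closed_discrete_iff_no_limpt ..
  have C1_iff_C2: "C1 \<longleftrightarrow> C2"
    unfolding C1_def C2_iff
    using continuous_imp_closed_glued_factors[OF hom] closed_glued_factors_imp_continuous[OF hom topsg]
    by blast
  have C2_imp_no_limpt: "\<not> z islimpt factor_image \<pi> c" if C2 for c z
    using that unfolding C2_iff
    by (intro separated_imp_no_limpt closed_glued_factors_imp_separated) blast+
  have no_limpt_imp_C2: C2 if "finitely_resolvable \<pi>" "\<forall>c z. \<not> z islimpt factor_image \<pi> c"
    using that unfolding C2_iff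
    by (intro allI separated_imp_closed_glued_factors no_limpt_imp_separated) blast+
  have C4_imp_no_limpt: "\<not> z islimpt factor_image \<pi> c" if C4 for c z
    using that unfolding C4_def by (intro discrete_ideal_imp_no_limpt[OF hom topsg]) blast+
  show ?thesis
    using C1_iff_C2 C3_iff C2_imp_no_limpt no_limpt_imp_C2 C4_imp_no_limpt by blast
qed

end
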